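(* Let $k\geq 2$ and $n\geq 3$ be integers. If $n\nrightarrow(3)_k^2$, then $2^n\nrightarrow(5)_k^3$.
   Context: For $m\in\mathbb N$ write $[m]=\{0,\dots,m-1\}$. For $n>r\geq1$, $k\geq2$, $n\geq s>r$, the relation $n\to(s)_k^r$ means that every colouring of the $r$-element subsets of $[n]$ with $k$ colours admits a subset of $[n]$ of size $s$ all of whose $r$-subsets receive the same colour; $n\nrightarrow(s)_k^r$ is its negation. *)

theory Defs
  imports Main
begin

text \<open>Ramsey arrow relation: n \<rightarrow> (s)^r_k. Colours are 0..k-1; [m] = {0..<m}.
  A colouring is any function on sets; only its values on r-subsets of [n] matter,
  and those must lie in [k].\<close>

definition arrows :: "nat \<Rightarrow> nat \<Rightarrow> nat \<Rightarrow> nat \<Rightarrow> bool" where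
  "arrows n s k r \<longleftrightarrow>
     (\<forall>c :: nat set \<Rightarrow> nat.
        (\<forall>X. X \<subseteq> {..<n} \<and> card X = r \<longrightarrow> c X < k) \<longrightarrow>
        (\<exists>S j. S \<subseteq> {..<n} \<and> card S = s \<and>
               (\<forall>X. X \<subseteq> S \<and> card X = r \<longrightarrow> c X = j)))"

end

theory Submission
  imports Defs
begin

text \<open>Erdos--Hajnal stepping up. Identify \<open>[2^n]\<close> with binary words of length \<open>n\<close> and let
  \<open>\<delta>(x, y) < n\<close> be the most significant bit in which \<open>x \<noteq> y\<close> differ. For \<open>a < b < c\<close> one has
  \<open>\<delta>(a, b) \<noteq> \<delta>(b, c)\<close> and \<open>\<delta>(a, c) = max \<delta>(a, b) \<delta>(b, c)\<close>, so colouring the triple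
  \<open>{a, b, c}\<close> with the colour of the pair \<open>{\<delta>(a, b), \<delta>(b, c)}\<close> under a colouring of \<open>[n]\<close>
  without monochromatic triangle is well defined. If \<open>x\<^sub>1 < \<dots> < x\<^sub>5\<close> were monochromatic, the
  consecutive values \<open>\<delta>\<^sub>i = \<delta>(x\<^sub>i, x\<^sub>i\<^sub>+\<^sub>1)\<close> cannot have a strict local maximum at both
  \<open>\<delta>\<^sub>2\<close> and \<open>\<delta>\<^sub>3\<close>; at a non-peak the three consecutive values are distinct and all their pairs
  are realised as \<open>\<delta>\<close>-pairs of triples, giving a monochromatic triangle in \<open>[n]\<close>.\<close>

text \<open>\<open>diff_bit x y\<close> is \<open>\<delta>(x, y)\<close>; it is \<open>0\<close> when \<open>x = y\<close>.\<close>

definition diff_bit :: "nat \<Rightarrow> nat \<Rightarrow> nat" where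
  "diff_bit x y = (LEAST i. x div 2 ^ Suc i = y div 2 ^ Suc i)"

definition diff_bits :: "nat set \<Rightarrow> nat set" where
  "diff_bits T = {diff_bit x y | x y. x \<in> T \<and> y \<in> T \<and> x < y}"

lemma div_power_eq_mono:
  fixes x y b :: nat
  assumes "x div b ^ i = y div b ^ i" and "i \<le> j"
  shows "x div b ^ j = y div b ^ j"
proof -
  have "b ^ j = b ^ i * b ^ (j - i)" using \<open>i \<le> j\<close> by (simp flip: power_add)
  then show ?thesis using assms(1) by (simp add: div_mult2_eq)
qed

lemma diff_bit_le_iff: "diff_bit x y \<le> i \<longleftrightarrow> x div 2 ^ Suc i = y div 2 ^ Suc i"
proof
  have "x < 2 ^ Suc (x + y)" "y < 2 ^ Suc (x + y)"
    using less_exp[of "Suc (x + y)"] by linarith+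
  then have "\<exists>i. x div 2 ^ Suc i = y div 2 ^ Suc i" by (intro exI[of _ "x + y"]) simp
  then have "x div 2 ^ Suc (diff_bit x y) = y div 2 ^ Suc (diff_bit x y)"
    unfolding diff_bit_def by (rule LeastI_ex)
  moreover assume "diff_bit x y \<le> i"
  ultimately show "x div 2 ^ Suc i = y div 2 ^ Suc i"
    using div_power_eq_mono Suc_le_mono by blast
next
  assume "x div 2 ^ Suc i = y div 2 ^ Suc i"
  then show "diff_bit x y \<le> i" unfolding diff_bit_def by (rule Least_le)
qed

lemma diff_bit_differs:
  assumes "x \<noteq> y"
  shows "x div 2 ^ diff_bit x y \<noteq> y div 2 ^ diff_bit x y"
proof (cases "diff_bit x y")
  case 0
  then show ?thesis using assms by simp
next
  case (Suc i)
  then show ?thesis using diff_bit_le_iff[of x y i] by simp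
qed

lemma diff_bit_less:
  assumes "x < 2 ^ n" and "y < 2 ^ n" and "x \<noteq> y"
  shows "diff_bit x y < n"
proof -
  have "n \<noteq> 0" using assms by (cases n) auto
  then have "diff_bit x y \<le> n - 1" unfolding diff_bit_le_iff using assms(1,2) by simp
  with \<open>n \<noteq> 0\<close> show ?thesis by simp
qed

lemma diff_bit_max:
  assumes "a \<le> b" and "b \<le> c"
  shows "diff_bit a c = max (diff_bit a b) (diff_bit b c)"
proof -
  have "a div m = c div m \<longleftrightarrow> a div m = b div m \<and> b div m = c div m" for m
    using div_le_mono[OF assms(1), of m] div_le_mono[OF assms(2), of m] by auto
  then have "diff_bit a c \<le> i \<longleftrightarrow> max (diff_bit a b) (diff_bit b c) \<le> i" for i
    unfolding max.bounded_iff diff_bit_le_iff by blast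
  then show ?thesis by (meson order.antisym order.refl)
qed

lemma diff_bit_neq:
  assumes "a < b" and "b < c"
  shows "diff_bit a b \<noteq> diff_bit b c"
proof
  assume eq: "diff_bit a b = diff_bit b c"
  define d where "d = diff_bit a b"
  have "a div 2 ^ d \<noteq> b div 2 ^ d" "b div 2 ^ d \<noteq> c div 2 ^ d"
    using diff_bit_differs[of a b] diff_bit_differs[of b c] assms eq d_def by auto
  moreover have "a div 2 ^ d \<le> b div 2 ^ d" "b div 2 ^ d \<le> c div 2 ^ d"
    using assms by (simp_all add: div_le_mono)
  ultimately have "a div 2 ^ d < b div 2 ^ d" "b div 2 ^ d < c div 2 ^ d" by auto
  moreover have "p div 2 \<noteq> r div 2" if "p < q" "q < r" for p q r :: nat
    using that by presburger
  ultimately have "a div 2 ^ d div 2 \<noteq> c div 2 ^ d div 2" by blast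
  moreover have "a div 2 ^ Suc d = c div 2 ^ Suc d"
    using diff_bit_le_iff[of a b d] diff_bit_le_iff[of b c d] eq d_def by simp
  moreover have "x div 2 ^ Suc d = x div 2 ^ d div 2" for x :: nat
    by (metis div_mult2_eq power_Suc2)
  ultimately show False by simp
qed

lemma diff_bits_triple:
  assumes "a < b" and "b < c"
  shows "diff_bits {a, b, c} = {diff_bit a b, diff_bit b c}"
proof -
  have "diff_bit a c \<in> {diff_bit a b, diff_bit b c}"
    using diff_bit_max[of a b c] assms by (simp add: max_def)
  then show ?thesis unfolding diff_bits_def using assms by auto
qed

lemma obtain_sorted_3:
  assumes "card (T :: nat set) = 3"
  obtains a b c where "a < b" "b < c" "T = {a, b, c}"
proof -
  have "finite T" using assms card.infinite by fastforce
  define L where "L = sorted_list_of_set T"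
  have "length L = 3" using assms L_def by simp
  then obtain a b c where L: "L = [a, b, c]"
    by (auto simp: length_Suc_conv numeral_eq_Suc)
  then have "T = {a, b, c}"
    unfolding L_def by (metis \<open>finite T\<close> set_sorted_list_of_set empty_set list.simps(15))
  moreover have "sorted_wrt (<) L" unfolding L_def by simp
  then have "a < b" "b < c" using L by auto
  ultimately show ?thesis using that by blast
qed

lemma obtain_sorted_5:
  assumes "card (T :: nat set) = 5"
  obtains a b c d e where "a < b" "b < c" "c < d" "d < e" "T = {a, b, c, d, e}"
proof -
  have "finite T" using assms card.infinite by fastforce
  define L where "L = sorted_list_of_set T"
  have "length L = 5" using assms L_def by simp
  then obtain a b c d e where L: "L = [a, b, c, d, e]"
    by (auto simp: length_Suc_conv numeral_eq_Suc)
  then have "T = {a, b, c, d, e}"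
    unfolding L_def by (metis \<open>finite T\<close> set_sorted_list_of_set empty_set list.simps(15))
  moreover have "sorted_wrt (<) L" unfolding L_def by simp
  then have "a < b" "b < c" "c < d" "d < e" using L by auto
  ultimately show ?thesis using that by blast
qed

lemma diff_bits_of_triple:
  assumes "T \<subseteq> {..<2 ^ n}" and "card T = 3"
  shows "diff_bits T \<subseteq> {..<n}" and "card (diff_bits T) = 2"
proof -
  obtain a b c where abc: "a < b" "b < c" "T = {a, b, c}"
    using obtain_sorted_3[OF assms(2)] by blast
  then show "diff_bits T \<subseteq> {..<n}"
    using diff_bits_triple diff_bit_less assms(1) by auto
  show "card (diff_bits T) = 2"
    using abc diff_bits_triple diff_bit_neq by simp
qed

lemma card_2_subset_of_3:
  assumes "X \<subseteq> {a, b, c}" and "card X = 2"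
  shows "X = {a, b} \<or> X = {b, c} \<or> X = {a, c}"
  using assms by (auto simp: card_2_iff insert_commute)

context
  fixes col :: "nat set \<Rightarrow> 'c" and S :: "nat set" and j :: 'c
  assumes mono: "\<forall>X. X \<subseteq> S \<and> card X = 3 \<longrightarrow> col (diff_bits X) = j"
begin

lemma diff_bit_pair_colour:
  assumes "{a, b, c} \<subseteq> S" and "a < b" and "b < c"
  shows "col {diff_bit a b, diff_bit b c} = j"
proof -
  have "card {a, b, c} = 3" using assms(2,3) by auto
  then show ?thesis using mono assms diff_bits_triple by metis
qed

text \<open>The absence of a strict peak at \<open>diff_bit b c\<close> is what makes the outer pair
  \<open>{diff_bit a b, diff_bit c e}\<close> the \<open>\<delta>\<close>-pair of the triple \<open>{a, b, e}\<close> or \<open>{a, c, e}\<close>.\<close>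

lemma monochromatic_triangle_of_four:
  assumes "{a, b, c, e} \<subseteq> S" and "a < b" "b < c" "c < e"
    and no_peak: "\<not> (diff_bit a b < diff_bit b c \<and> diff_bit c e < diff_bit b c)"
  shows "card {diff_bit a b, diff_bit b c, diff_bit c e} = 3 \<and>
    (\<forall>X. X \<subseteq> {diff_bit a b, diff_bit b c, diff_bit c e} \<and> card X = 2 \<longrightarrow> col X = j)"
proof -
  define \<alpha> \<beta> \<gamma> where "\<alpha> = diff_bit a b" "\<beta> = diff_bit b c" "\<gamma> = diff_bit c e"
  have "{a, b, c} \<subseteq> S" "{a, b, e} \<subseteq> S" "{a, c, e} \<subseteq> S" "{b, c, e} \<subseteq> S"
    using assms(1) by auto
  note pair_colour = this[THEN diff_bit_pair_colour]
  have \<alpha>\<beta>: "col {\<alpha>, \<beta>} = j" and \<beta>\<gamma>: "col {\<beta>, \<gamma>} = j"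
    using pair_colour(1,4) assms(2-4) unfolding \<alpha>_\<beta>_\<gamma>_def by simp_all
  have "\<alpha> \<noteq> \<beta>" "\<beta> \<noteq> \<gamma>"
    using diff_bit_neq assms(2-4) unfolding \<alpha>_\<beta>_\<gamma>_def by simp_all
  have ac: "diff_bit a c = max \<alpha> \<beta>" and be: "diff_bit b e = max \<beta> \<gamma>"
    using diff_bit_max assms(2-4) unfolding \<alpha>_\<beta>_\<gamma>_def by simp_all
  have \<alpha>\<gamma>: "\<alpha> \<noteq> \<gamma> \<and> col {\<alpha>, \<gamma>} = j"
  proof (cases "\<beta> < \<gamma>")
    case True
    have "max \<alpha> \<beta> \<noteq> \<gamma>"
      using diff_bit_neq[of a c e] ac assms(2-4) unfolding \<alpha>_\<beta>_\<gamma>_def by simp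
    moreover have "col {\<alpha>, max \<beta> \<gamma>} = j"
      using pair_colour(2) assms(2-4) be unfolding \<alpha>_\<beta>_\<gamma>_def by simp
    ultimately show ?thesis using True by (auto simp: max_def)
  next
    case False
    with \<open>\<beta> \<noteq> \<gamma>\<close> \<open>\<alpha> \<noteq> \<beta>\<close> no_peak have "\<gamma> < \<beta>" "\<beta> < \<alpha>"
      unfolding \<alpha>_\<beta>_\<gamma>_def by auto
    moreover have "col {max \<alpha> \<beta>, \<gamma>} = j"
      using pair_colour(3) assms(2-4) ac unfolding \<alpha>_\<beta>_\<gamma>_def by simp
    ultimately show ?thesis by (simp add: max_def)
  qed
  have "card {\<alpha>, \<beta>, \<gamma>} = 3"
    using \<open>\<alpha> \<noteq> \<beta>\<close> \<open>\<beta> \<noteq> \<gamma>\<close> \<alpha>\<gamma> by simp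
  moreover have "col X = j" if "X \<subseteq> {\<alpha>, \<beta>, \<gamma>}" "card X = 2" for X
    using card_2_subset_of_3[OF that] \<alpha>\<beta> \<beta>\<gamma> \<alpha>\<gamma> by blast
  ultimately show ?thesis unfolding \<alpha>_\<beta>_\<gamma>_def by blast
qed

lemma monochromatic_triangle_of_five:
  assumes "S \<subseteq> {..<2 ^ n}" and "card S = 5"
  shows "\<exists>T. T \<subseteq> {..<n} \<and> card T = 3 \<and> (\<forall>X. X \<subseteq> T \<and> card X = 2 \<longrightarrow> col X = j)"
proof -
  obtain x\<^sub>1 x\<^sub>2 x\<^sub>3 x\<^sub>4 x\<^sub>5 where x: "x\<^sub>1 < x\<^sub>2" "x\<^sub>2 < x\<^sub>3" "x\<^sub>3 < x\<^sub>4" "x\<^sub>4 < x\<^sub>5"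
    and S: "S = {x\<^sub>1, x\<^sub>2, x\<^sub>3, x\<^sub>4, x\<^sub>5}"
    using obtain_sorted_5[OF assms(2)] by blast
  have "\<exists>a b c e. {a, b, c, e} \<subseteq> S \<and> a < b \<and> b < c \<and> c < e \<and>
      \<not> (diff_bit a b < diff_bit b c \<and> diff_bit c e < diff_bit b c)"
  proof (cases "diff_bit x\<^sub>1 x\<^sub>2 < diff_bit x\<^sub>2 x\<^sub>3 \<and> diff_bit x\<^sub>3 x\<^sub>4 < diff_bit x\<^sub>2 x\<^sub>3")
    case True
    then show ?thesis using x unfolding S
      by (intro exI[of _ x\<^sub>2] exI[of _ x\<^sub>3] exI[of _ x\<^sub>4] exI[of _ x\<^sub>5]) auto
  next
    case False
    then show ?thesis using x unfolding S
      by (intro exI[of _ x\<^sub>1] exI[of _ x\<^sub>2] exI[of _ x\<^sub>3] exI[of _ x\<^sub>4]) auto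
  qed
  then obtain a b c e where abce: "{a, b, c, e} \<subseteq> S" "a < b" "b < c" "c < e"
    and "\<not> (diff_bit a b < diff_bit b c \<and> diff_bit c e < diff_bit b c)"
    by blast
  then have triangle: "card {diff_bit a b, diff_bit b c, diff_bit c e} = 3 \<and>
      (\<forall>X. X \<subseteq> {diff_bit a b, diff_bit b c, diff_bit c e} \<and> card X = 2 \<longrightarrow> col X = j)"
    by (rule monochromatic_triangle_of_four)
  have "diff_bit x y < n" if "x \<in> S" "y \<in> S" "x < y" for x y
    using diff_bit_less assms(1) that by auto
  then have "{diff_bit a b, diff_bit b c, diff_bit c e} \<subseteq> {..<n}"
    using abce by auto
  with triangle show ?thesis by blast
qed

end

theorem mainTheorem8:
  fixes k n :: nat
  assumes "k \<ge> 2" and "n \<ge> 3"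
    and "\<not> arrows n 3 k 2"
  shows "\<not> arrows (2 ^ n) 5 k 3"
proof -
  have "\<exists>c :: nat set \<Rightarrow> nat. (\<forall>X. X \<subseteq> {..<n} \<and> card X = 2 \<longrightarrow> c X < k) \<and>
      \<not> (\<exists>T j. T \<subseteq> {..<n} \<and> card T = 3 \<and> (\<forall>X. X \<subseteq> T \<and> card X = 2 \<longrightarrow> c X = j))"
    using assms(3) unfolding arrows_def by (simp only: not_all not_imp)
  then obtain c :: "nat set \<Rightarrow> nat"
    where range: "\<forall>X. X \<subseteq> {..<n} \<and> card X = 2 \<longrightarrow> c X < k"
      and no_triangle: "\<not> (\<exists>T j. T \<subseteq> {..<n} \<and> card T = 3 \<and>
                              (\<forall>X. X \<subseteq> T \<and> card X = 2 \<longrightarrow> c X = j))"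
    by blast
  have "c (diff_bits T) < k" if "T \<subseteq> {..<2 ^ n}" "card T = 3" for T
    using range diff_bits_of_triple[OF that] by blast
  moreover have False
    if "S \<subseteq> {..<2 ^ n}" "card S = 5" "\<forall>X. X \<subseteq> S \<and> card X = 3 \<longrightarrow> c (diff_bits X) = j"
    for S j
    using monochromatic_triangle_of_five[OF that(3,1,2)] no_triangle by blast
  ultimately show ?thesis
    unfolding arrows_def not_all not_imp by (intro exI[of _ "\<lambda>T. c (diff_bits T)"]) blast
qed

end
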